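(* Let $\kappa > 1$. Consider a finite set $\mathcal{S}$ of sensors placed in a square region $R$ of dimensions $s \times s$, where each sensor $i$ has sensing region $D_i$ equal to the closed disk of radius $1$ centered at its location, and each sensor has an initial battery life of $1$ unit of time. Let $d_R$ denote the depth of $R$ (defined below) and let $\mathcal{L}^*$ denote the maximum lifetime of the system under optimal scheduling (defined below). Then $\mathcal{L}^* = O(\kappa \cdot d_R)$, i.e., there is an absolute constant $c>0$, independent of the instance, such that $\mathcal{L}^* \le c\,\kappa\, d_R$.
   Context: A pair of points $(p,q)$ is a $\kappa$-pair if the distance between them is $\kappa$. A curve is a $\kappa$-curve if its endpoints form a $\kappa$-pair. A set of sensors $C \subseteq \mathcal{S}$ is a $\kappa$-weak cover if every $\kappa$-curve contained in $R$ intersects $\bigcup_{i \in C} D_i$. A point $p$ is covered by sensor $i$ if $p \in D_i$. The depth of a point $p$ is the number of sensors in $\mathcal{S}$ covering $p$, and the depth $d_R$ of the region $R$ is the maximum depth of any point of $R$. A schedule consists of a collection $\{C_1,\dots,C_k\}$ of $\kappa$-weak covers together with activation times $\delta_1,\dots,\delta_k \ge 0$ (cover $C_j$ is active for time $\delta_j$), subject to the battery constraint that each sensor's total active time $\sum_{j : i \in C_j} \delta_j$ is at most its battery life $1$. The lifetime of such a schedule is $\sum_{j=1}^k \delta_j$, and $\mathcal{L}^*$ is the maximum (supremum) lifetime over all such schedules. *)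

theory Defs
  imports "HOL-Analysis.Analysis"
begin

text \<open>Points of the plane are pairs of reals (product metric = Euclidean metric).
  Sensors are indexed by a finite set S of naturals; sensor i sits at loc i and senses the
  closed unit disk around it.\<close>

definition square :: "real \<Rightarrow> (real \<times> real) set" where
  "square s = cbox (0,0) (s,s)"

definition disk :: "(nat \<Rightarrow> real \<times> real) \<Rightarrow> nat \<Rightarrow> (real \<times> real) set" where
  "disk loc i = cball (loc i) 1"

definition kappa_pair :: "real \<Rightarrow> real \<times> real \<Rightarrow> real \<times> real \<Rightarrow> bool" where
  "kappa_pair \<kappa> p q \<longleftrightarrow> dist p q = \<kappa>"

definition kappa_curve :: "real \<Rightarrow> (real \<Rightarrow> real \<times> real) \<Rightarrow> bool" where
  "kappa_curve \<kappa> g \<longleftrightarrow> path g \<and> kappa_pair \<kappa> (pathstart g) (pathfinish g)"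

definition weak_cover ::
  "real \<Rightarrow> (real \<times> real) set \<Rightarrow> (nat \<Rightarrow> real \<times> real) \<Rightarrow> nat set \<Rightarrow> nat set \<Rightarrow> bool" where
  "weak_cover \<kappa> R loc S C \<longleftrightarrow> C \<subseteq> S \<and>
     (\<forall>g. kappa_curve \<kappa> g \<and> path_image g \<subseteq> R \<longrightarrow>
          path_image g \<inter> (\<Union>i\<in>C. disk loc i) \<noteq> {})"

definition depth :: "(nat \<Rightarrow> real \<times> real) \<Rightarrow> nat set \<Rightarrow> real \<times> real \<Rightarrow> nat" where
  "depth loc S p = card {i \<in> S. p \<in> disk loc i}"

definition region_depth :: "(nat \<Rightarrow> real \<times> real) \<Rightarrow> nat set \<Rightarrow> (real \<times> real) set \<Rightarrow> nat" where
  "region_depth loc S R = Max (depth loc S ` R)"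

definition schedule ::
  "real \<Rightarrow> (real \<times> real) set \<Rightarrow> (nat \<Rightarrow> real \<times> real) \<Rightarrow> nat set
   \<Rightarrow> nat \<Rightarrow> (nat \<Rightarrow> nat set) \<Rightarrow> (nat \<Rightarrow> real) \<Rightarrow> bool" where
  "schedule \<kappa> R loc S k C \<delta> \<longleftrightarrow>
     (\<forall>j<k. weak_cover \<kappa> R loc S (C j) \<and> \<delta> j \<ge> 0) \<and>
     (\<forall>i\<in>S. (\<Sum>j\<in>{j. j < k \<and> i \<in> C j}. \<delta> j) \<le> 1)"

definition lifetimes :: "real \<Rightarrow> (real \<times> real) set \<Rightarrow> (nat \<Rightarrow> real \<times> real) \<Rightarrow> nat set \<Rightarrow> real set" where
  "lifetimes \<kappa> R loc S = {(\<Sum>j<k. \<delta> j) | k C \<delta>. schedule \<kappa> R loc S k C \<delta>}"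

text \<open>L* = Sup of lifetimes; "L* \<le> B" is stated as: every schedule lifetime is \<le> B.\<close>
definition max_lifetime :: "real \<Rightarrow> (real \<times> real) set \<Rightarrow> (nat \<Rightarrow> real \<times> real) \<Rightarrow> nat set \<Rightarrow> real" where
  "max_lifetime \<kappa> R loc S = Sup (lifetimes \<kappa> R loc S)"

end

theory Submission imports Defs begin

text \<open>If p and q form a \<open>\<kappa>\<close>-pair in the square, with coordinate differences a, b \<le> \<kappa>, then the
  L-shaped path from (0,0) to (a,0) to (a,b) is a \<open>\<kappa>\<close>-curve in the square, so every weak cover
  contains a sensor whose disk meets it; since each sensor is active for time at most 1, the
  lifetime is at most the number of such sensors. Their locations lie in the 1-neighbourhoods
  of two boxes of sides O(\<kappa>) \<times> O(1). Cutting a box into cells of side 1/2, all sensors in one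
  cell cover the location of any one of them, so each cell holds at most d_R sensors, and a
  box of side w \<times> h holds at most (2w+2)(2h+2) d_R sensors.\<close>

lemma depth_le_region_depth:
  assumes "finite S" "p \<in> R"
  shows "depth loc S p \<le> region_depth loc S R"
proof -
  have "depth loc S ` R \<subseteq> {..card S}"
    unfolding depth_def using assms(1) by (auto intro!: card_mono)
  then have "finite (depth loc S ` R)"
    using finite_subset by blast
  then show ?thesis
    unfolding region_depth_def using assms(2) by (intro Max_ge) auto
qed

lemma card_covering_le_region_depth:
  assumes "finite S" "T \<subseteq> S" "p \<in> R" "\<forall>i\<in>T. p \<in> disk loc i"
  shows "card T \<le> region_depth loc S R"
proof -
  have "card T \<le> depth loc S p"
    unfolding depth_def using assms by (intro card_mono) auto
  also have "\<dots> \<le> region_depth loc S R"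
    using depth_le_region_depth assms by blast
  finally show ?thesis .
qed

lemma dist_le_1_if_same_half_cell:
  fixes x y :: "real \<times> real"
  assumes "\<lfloor>2 * fst x\<rfloor> = \<lfloor>2 * fst y\<rfloor>" "\<lfloor>2 * snd x\<rfloor> = \<lfloor>2 * snd y\<rfloor>"
  shows "dist x y \<le> 1"
proof -
  have "\<bar>fst x - fst y\<bar> \<le> 1/2" "\<bar>snd x - snd y\<bar> \<le> 1/2"
    using assms by linarith+
  then have "(fst x - fst y)\<^sup>2 \<le> (1/2)\<^sup>2" "(snd x - snd y)\<^sup>2 \<le> (1/2)\<^sup>2"
    by (metis abs_ge_zero power2_abs power_mono)+
  then have "(fst x - fst y)\<^sup>2 + (snd x - snd y)\<^sup>2 \<le> 1"
    by (simp add: power2_eq_square)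
  then show ?thesis
    by (metis dist_Pair_Pair dist_real_def power2_abs prod.collapse real_sqrt_le_1_iff)
qed

lemma card_floor_double_range_le:
  fixes x y :: real
  assumes "x \<le> y"
  shows "real (card {\<lfloor>2 * x\<rfloor>..\<lfloor>2 * y\<rfloor>}) \<le> 2 * (y - x) + 2"
proof -
  have "\<lfloor>2 * x\<rfloor> \<le> \<lfloor>2 * y\<rfloor>"
    using assms by (simp add: floor_mono)
  moreover have "real_of_int \<lfloor>2 * y\<rfloor> + 1 - real_of_int \<lfloor>2 * x\<rfloor> \<le> 2 * (y - x) + 2"
    using of_int_floor_le[of "2 * y"] real_of_int_floor_gt_diff_one[of "2 * x"] by argo
  ultimately show ?thesis
    by simp
qed

lemma card_sensors_in_box_le:
  fixes loc :: "nat \<Rightarrow> real \<times> real"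
  assumes "finite S" "T \<subseteq> S" "\<forall>i\<in>T. loc i \<in> R" "x0 \<le> x1" "y0 \<le> y1"
    and in_box: "\<forall>i\<in>T. loc i \<in> cbox (x0, y0) (x1, y1)"
  shows "real (card T) \<le> (2 * (x1 - x0) + 2) * (2 * (y1 - y0) + 2) * real (region_depth loc S R)"
proof -
  define cell where "cell i = (\<lfloor>2 * fst (loc i)\<rfloor>, \<lfloor>2 * snd (loc i)\<rfloor>)" for i
  define d where "d = region_depth loc S R"
  have "finite T"
    using assms(1,2) finite_subset by blast
  have cells: "cell ` T \<subseteq> {\<lfloor>2 * x0\<rfloor>..\<lfloor>2 * x1\<rfloor>} \<times> {\<lfloor>2 * y0\<rfloor>..\<lfloor>2 * y1\<rfloor>}"
  proof
    fix z assume "z \<in> cell ` T"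
    then obtain i where "i \<in> T" "z = cell i"
      by blast
    then have "x0 \<le> fst (loc i)" "fst (loc i) \<le> x1" "y0 \<le> snd (loc i)" "snd (loc i) \<le> y1"
      using in_box by (auto simp: cbox_Pair_eq mem_Times_iff)
    then show "z \<in> {\<lfloor>2 * x0\<rfloor>..\<lfloor>2 * x1\<rfloor>} \<times> {\<lfloor>2 * y0\<rfloor>..\<lfloor>2 * y1\<rfloor>}"
      unfolding \<open>z = cell i\<close> cell_def by (simp add: floor_mono)
  qed
  have "real (card (cell ` T))
      \<le> real (card {\<lfloor>2 * x0\<rfloor>..\<lfloor>2 * x1\<rfloor>}) * real (card {\<lfloor>2 * y0\<rfloor>..\<lfloor>2 * y1\<rfloor>})"
    using card_mono[OF _ cells] by (simp add: card_cartesian_product flip: of_nat_mult)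
  also have "\<dots> \<le> (2 * (x1 - x0) + 2) * (2 * (y1 - y0) + 2)"
    using card_floor_double_range_le assms(4,5) by (intro mult_mono) auto
  finally have card_cells: "real (card (cell ` T)) \<le> (2 * (x1 - x0) + 2) * (2 * (y1 - y0) + 2)" .
  have fiber: "card {i\<in>T. cell i = z} \<le> d" if "z \<in> cell ` T" for z
  proof -
    obtain i0 where i0: "i0 \<in> T" "cell i0 = z"
      using \<open>z \<in> cell ` T\<close> by blast
    have "\<forall>i\<in>{i\<in>T. cell i = z}. loc i0 \<in> disk loc i"
      using i0 dist_le_1_if_same_half_cell[of "loc _" "loc i0"] by (auto simp: disk_def cell_def)
    then show ?thesis
      unfolding d_def using assms(1-3) i0
      by (intro card_covering_le_region_depth[where p = "loc i0"]) auto
  qed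
  have "T = (\<Union>z\<in>cell ` T. {i\<in>T. cell i = z})"
    by auto
  then have "card T \<le> (\<Sum>z\<in>cell ` T. card {i\<in>T. cell i = z})"
    by (metis card_UN_le \<open>finite T\<close> finite_imageI)
  also have "\<dots> \<le> card (cell ` T) * d"
    using sum_mono[of "cell ` T" _ "\<lambda>_. d"] fiber by simp
  finally have "real (card T) \<le> real (card (cell ` T)) * real d"
    by (metis of_nat_le_iff of_nat_mult)
  also have "\<dots> \<le> (2 * (x1 - x0) + 2) * (2 * (y1 - y0) + 2) * real d"
    using card_cells by (intro mult_right_mono) auto
  finally show ?thesis
    by (simp add: d_def)
qed

lemma card_disks_meeting_box_le:
  fixes loc :: "nat \<Rightarrow> real \<times> real"
  assumes "finite S" "\<forall>i\<in>S. loc i \<in> R" "x0 \<le> x1" "y0 \<le> y1"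
  shows "real (card {i\<in>S. disk loc i \<inter> cbox (x0, y0) (x1, y1) \<noteq> {}})
    \<le> (2 * (x1 - x0) + 6) * (2 * (y1 - y0) + 6) * real (region_depth loc S R)"
proof -
  have "loc i \<in> cbox (x0 - 1, y0 - 1) (x1 + 1, y1 + 1)"
    if meets: "disk loc i \<inter> cbox (x0, y0) (x1, y1) \<noteq> {}" for i
  proof -
    obtain x where x: "dist (loc i) x \<le> 1" "x \<in> cbox (x0, y0) (x1, y1)"
      using meets unfolding disk_def by (meson disjoint_iff mem_cball)
    have "\<bar>fst (loc i) - fst x\<bar> \<le> 1" "\<bar>snd (loc i) - snd x\<bar> \<le> 1"
      using dist_fst_le[of "loc i" x] dist_snd_le[of "loc i" x] x(1)
      by (auto simp: dist_real_def)
    then show ?thesis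
      using x(2) by (auto simp: cbox_Pair_eq mem_Times_iff)
  qed
  then have "real (card {i\<in>S. disk loc i \<inter> cbox (x0, y0) (x1, y1) \<noteq> {}})
      \<le> (2 * ((x1 + 1) - (x0 - 1)) + 2) * (2 * ((y1 + 1) - (y0 - 1)) + 2)
        * real (region_depth loc S R)"
    using assms by (intro card_sensors_in_box_le) auto
  then show ?thesis
    by (simp add: algebra_simps)
qed

lemma lifetime_le_card_disks_meeting:
  assumes sch: "schedule \<kappa> R loc S k C \<delta>" and "finite S"
    and g: "kappa_curve \<kappa> g" "path_image g \<subseteq> R"
  shows "(\<Sum>j<k. \<delta> j) \<le> real (card {i\<in>S. disk loc i \<inter> path_image g \<noteq> {}})"
proof -
  define T where "T = {i\<in>S. disk loc i \<inter> path_image g \<noteq> {}}"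
  have "finite T"
    using \<open>finite S\<close> by (simp add: T_def)
  have cover_hits: "\<delta> j \<le> (\<Sum>i\<in>T. if i \<in> C j then \<delta> j else 0)" if "j < k" for j
  proof -
    have "weak_cover \<kappa> R loc S (C j)" "\<delta> j \<ge> 0"
      using sch that by (auto simp: schedule_def)
    then obtain i0 where "i0 \<in> C j" "i0 \<in> T"
      using g unfolding weak_cover_def T_def by blast
    then show ?thesis
      using member_le_sum[of i0 T "\<lambda>i. if i \<in> C j then \<delta> j else 0"] \<open>finite T\<close> \<open>\<delta> j \<ge> 0\<close>
      by auto
  qed
  have "(\<Sum>j<k. \<delta> j) \<le> (\<Sum>j<k. \<Sum>i\<in>T. if i \<in> C j then \<delta> j else 0)"
    using cover_hits by (intro sum_mono) simp
  also have "\<dots> = (\<Sum>i\<in>T. \<Sum>j\<in>{j. j < k \<and> i \<in> C j}. \<delta> j)"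
    by (subst sum.swap) (simp add: sum.inter_filter[symmetric] conj_commute)
  also have "\<dots> \<le> (\<Sum>i\<in>T. 1)"
    using sch by (intro sum_mono) (auto simp: schedule_def T_def)
  finally show ?thesis
    by (simp add: T_def)
qed

lemma L_shaped_kappa_curve_in_square:
  assumes "p \<in> square s" "q \<in> square s" "kappa_pair \<kappa> p q"
  obtains a b g where "0 \<le> a" "a \<le> \<kappa>" "0 \<le> b" "b \<le> \<kappa>"
    "kappa_curve \<kappa> g" "path_image g \<subseteq> square s"
    "path_image g \<subseteq> cbox (0, 0) (a, 0) \<union> cbox (a, 0) (a, b)"
proof -
  define a where "a = \<bar>fst p - fst q\<bar>"
  define b where "b = \<bar>snd p - snd q\<bar>"
  have square_iff: "x \<in> square s \<longleftrightarrow> 0 \<le> fst x \<and> fst x \<le> s \<and> 0 \<le> snd x \<and> snd x \<le> s" for x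
    by (auto simp: square_def cbox_Pair_eq mem_Times_iff)
  have ab: "0 \<le> a" "a \<le> s" "0 \<le> b" "b \<le> s"
    using assms(1,2) unfolding square_iff a_def b_def by auto
  have \<kappa>: "\<kappa> = sqrt (a\<^sup>2 + b\<^sup>2)"
    using assms(3) unfolding kappa_pair_def a_def b_def
    by (metis dist_Pair_Pair prod.collapse dist_real_def)
  define g where "g = linepath (0, 0) (a, 0) +++ linepath (a, 0) (a, b)"
  have "kappa_curve \<kappa> g"
    unfolding kappa_curve_def kappa_pair_def g_def by (simp add: dist_Pair_Pair \<kappa> dist_real_def)
  have "closed_segment (0, 0) (a, 0) \<subseteq> cbox (0, 0) (a::real, 0::real)"
    "closed_segment (a, 0) (a, b) \<subseteq> cbox (a, 0) (a::real, b::real)"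
    using ab by (intro closed_segment_subset convex_box(1); auto simp: cbox_Pair_eq)+
  then have g_L: "path_image g \<subseteq> cbox (0, 0) (a, 0) \<union> cbox (a, 0) (a, b)"
    by (auto simp: g_def path_image_join)
  have "cbox (0, 0) (a, 0) \<union> cbox (a, 0) (a, b) \<subseteq> square s"
    using ab by (auto simp: square_def cbox_Pair_eq mem_Times_iff)
  moreover have "a \<le> \<kappa>" "b \<le> \<kappa>"
    unfolding \<kappa> using ab by (auto intro: real_le_rsqrt)
  ultimately show ?thesis
    using that ab \<open>kappa_curve \<kappa> g\<close> g_L by blast
qed

theorem theorem1:
  shows "\<exists>c>0. \<forall>\<kappa> s (S::nat set) loc.
     \<kappa> > 1 \<and> finite S \<and> (\<forall>i\<in>S. loc i \<in> square s) \<and>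
     (\<exists>p\<in>square s. \<exists>q\<in>square s. kappa_pair \<kappa> p q) \<longrightarrow>
     (\<forall>L\<in>lifetimes \<kappa> (square s) loc S.
        L \<le> c * \<kappa> * real (region_depth loc S (square s)))"
proof (intro exI[of _ 96] conjI allI impI ballI)
  fix \<kappa> s and S :: "nat set" and loc L
  assume H: "1 < \<kappa> \<and> finite S \<and> (\<forall>i\<in>S. loc i \<in> square s) \<and>
     (\<exists>p\<in>square s. \<exists>q\<in>square s. kappa_pair \<kappa> p q)"
    and "L \<in> lifetimes \<kappa> (square s) loc S"
  then obtain k C \<delta> where sch: "schedule \<kappa> (square s) loc S k C \<delta>" and L: "L = (\<Sum>j<k. \<delta> j)"
    by (auto simp: lifetimes_def)
  obtain a b g where ab: "0 \<le> a" "a \<le> \<kappa>" "0 \<le> b" "b \<le> \<kappa>"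
    and g: "kappa_curve \<kappa> g" "path_image g \<subseteq> square s"
    and g_L: "path_image g \<subseteq> cbox (0, 0) (a, 0) \<union> cbox (a, 0) (a, b)"
    using H L_shaped_kappa_curve_in_square by metis
  define meets where "meets B = {i\<in>S. disk loc i \<inter> B \<noteq> {}}" for B
  define d where "d = real (region_depth loc S (square s))"
  have "card (meets (path_image g)) \<le> card (meets (cbox (0, 0) (a, 0)) \<union> meets (cbox (a, 0) (a, b)))"
    using H g_L by (intro card_mono) (auto simp: meets_def)
  also have "\<dots> \<le> card (meets (cbox (0, 0) (a, 0))) + card (meets (cbox (a, 0) (a, b)))"
    by (rule card_Un_le)
  finally have "L \<le> real (card (meets (cbox (0, 0) (a, 0)))) + real (card (meets (cbox (a, 0) (a, b))))"
    using lifetime_le_card_disks_meeting[OF sch _ g] H L by (simp add: meets_def)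
  also have "\<dots> \<le> (2 * (a - 0) + 6) * (2 * (0 - 0) + 6) * d + (2 * (a - a) + 6) * (2 * (b - 0) + 6) * d"
    unfolding meets_def d_def using H ab by (intro add_mono card_disks_meeting_box_le) auto
  also have "\<dots> = (12 * (a + b) + 72) * d"
    by (simp add: algebra_simps)
  also have "\<dots> \<le> 96 * \<kappa> * d"
    using H ab by (intro mult_right_mono) (auto simp: d_def)
  finally show "L \<le> 96 * \<kappa> * real (region_depth loc S (square s))"
    by (simp add: d_def)
qed simp

end
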